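(* Let $p\ge3$ be an integer. For each integer $k\ge1$ and each $1\le j\le k$, let $a_j=a_j(k)$ denote the smallest positive root of $g_j(\alpha)=j\alpha^{p-1}-(k-j+1)-(j-1)(1+\alpha)^{p-1}$. Then $\displaystyle\lim_{k\to\infty}\sum_{j=1}^k\frac1{a_j(k)}=\infty$. *)

theory Defs
  imports Complex_Main
begin

definition gfun :: "nat \<Rightarrow> nat \<Rightarrow> nat \<Rightarrow> real \<Rightarrow> real" where
  "gfun p k j \<alpha> = real j * \<alpha> ^ (p - 1) - (real k - real j + 1)
                   - (real j - 1) * (1 + \<alpha>) ^ (p - 1)"

definition aroot :: "nat \<Rightarrow> nat \<Rightarrow> nat \<Rightarrow> real" where
  "aroot p k j = Inf {\<alpha>::real. \<alpha> > 0 \<and> gfun p k j \<alpha> = 0}"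

end

theory Submission
  imports Defs "HOL-Analysis.Harmonic_Numbers" "HOL-Library.Discrete_Functions"
    "HOL-Real_Asymp.Real_Asymp"
begin

text \<open>
  Every root satisfies \<open>a\<^sub>j(k) \<ge> 1\<close>, because \<open>g\<^sub>j < 0\<close> on \<open>[0,1)\<close>. Conversely, once
  \<open>j\<^sup>2 \<ge> k\<close>, the function \<open>g\<^sub>j\<close> is nonnegative at \<open>C j\<close> for a constant \<open>C\<close> depending only
  on \<open>p\<close>, so by the intermediate value theorem \<open>a\<^sub>j(k) \<le> C j\<close>. Hence the sum is at least
  \<open>C\<^sup>-\<^sup>1 \<Sum>\<^bsub>\<surd>k < j \<le> k\<^esub> 1/j \<ge> C\<^sup>-\<^sup>1 (ln k / 2 - ln 2)\<close>, which tends to infinity.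
\<close>

lemma one_plus_power_Suc_le:
  fixes x :: real
  assumes "x \<ge> 0"
  shows "(1 + x) ^ Suc n \<le> x ^ Suc n + real (Suc n) * (1 + x) ^ n"
proof (induction n)
  case 0
  then show ?case by simp
next
  case (Suc n)
  have "(1 + x) ^ Suc (Suc n) \<le> (1 + x) * (x ^ Suc n + real (Suc n) * (1 + x) ^ n)"
    using Suc assms by (simp add: mult_left_mono)
  also have "\<dots> = x ^ Suc (Suc n) + x ^ Suc n + real (Suc n) * (1 + x) ^ Suc n"
    by (simp add: algebra_simps)
  also have "x ^ Suc n \<le> (1 + x) ^ Suc n"
    using assms by (intro power_mono) auto
  finally show ?case by (simp add: algebra_simps)
qed

lemma Inf_positive_roots_between:
  fixes f :: "real \<Rightarrow> real"
  assumes "continuous_on {0..b} f" "0 \<le> b" "f b \<ge> 0" "c > 0"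
    and neg: "\<And>x. 0 \<le> x \<Longrightarrow> x < c \<Longrightarrow> f x < 0"
  shows "c \<le> Inf {x. x > 0 \<and> f x = 0} \<and> Inf {x. x > 0 \<and> f x = 0} \<le> b"
proof -
  let ?S = "{x. x > 0 \<and> f x = 0}"
  have "f 0 < 0"
    using neg \<open>c > 0\<close> by simp
  then have "\<exists>x\<ge>0. x \<le> b \<and> f x = 0"
    using IVT'[of f 0 0 b] assms by (simp add: less_imp_le)
  then obtain x where x: "0 \<le> x" "x \<le> b" "f x = 0"
    by blast
  have root_ge: "c \<le> y" if "y \<in> ?S" for y
    using that neg[of y] by force
  have "x \<in> ?S"
    using x \<open>f 0 < 0\<close> by (cases "x = 0") auto
  moreover from this have "Inf ?S \<le> x"
    using root_ge by (intro cInf_lower bdd_belowI) auto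
  moreover from \<open>x \<in> ?S\<close> have "c \<le> Inf ?S"
    using root_ge by (intro cInf_greatest) auto
  ultimately show ?thesis using x by linarith
qed

lemma gfun_neg_below_one:
  assumes "p \<ge> 3" "1 \<le> j" "j \<le> k" "0 \<le> \<alpha>" "\<alpha> < 1"
  shows "gfun p k j \<alpha> < 0"
proof -
  have "real j * \<alpha> ^ (p - 1) < real j"
    using assms by (simp add: power_less_one_iff)
  moreover have "real j - 1 \<le> (real j - 1) * (1 + \<alpha>) ^ (p - 1)"
    using assms by (simp add: mult_le_cancel_left1 one_le_power)
  moreover have "real j \<le> real k"
    using assms by simp
  ultimately show ?thesis
    unfolding gfun_def by simp
qed

definition root_slope :: "nat \<Rightarrow> real" where
  "root_slope p = 2 * real (p - 1) * 2 ^ (p - 2)"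

lemma root_slope_ge_two:
  assumes "p \<ge> 2"
  shows "root_slope p \<ge> 2"
proof -
  have "1 \<le> real (p - 1) * 2 ^ (p - 2)"
    using assms mult_mono[of 1 "real (p - 1)" 1 "2 ^ (p - 2)"] by simp
  moreover have "root_slope p = 2 * (real (p - 1) * 2 ^ (p - 2))"
    unfolding root_slope_def by (rule mult.assoc)
  ultimately show ?thesis
    by linarith
qed

text \<open>
  With \<open>q = p - 1\<close>, the bound \<open>(1 + a)\<^sup>q \<le> a\<^sup>q + q (1 + a)\<^sup>q\<^sup>-\<^sup>1\<close> cancels the leading terms of
  \<open>g\<^sub>j(a)\<close> and leaves \<open>g\<^sub>j(a) \<ge> a\<^sup>q\<^sup>-\<^sup>1 (a - C j / 2) - k\<close>; at \<open>a = C n\<close> this is at least \<open>n\<^sup>2 - k\<close>.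
\<close>

lemma gfun_nonneg_at_root_slope:
  assumes "p \<ge> 3" "1 \<le> j" "j \<le> n" "k \<le> n\<^sup>2"
  shows "gfun p k j (root_slope p * real n) \<ge> 0"
proof -
  define m where "m = p - 2"
  define a where "a = root_slope p * real n"
  have p1: "p - 1 = Suc m" and "m \<ge> 1"
    using assms by (auto simp: m_def)
  have slope: "root_slope p = 2 * real (Suc m) * 2 ^ m"
    using p1 by (simp add: root_slope_def m_def)
  have "root_slope p \<ge> 2"
    using assms by (intro root_slope_ge_two) simp
  have n1: "real n \<ge> 1"
    using assms by simp
  have a_ge_n: "a \<ge> real n"
    unfolding a_def using \<open>root_slope p \<ge> 2\<close> n1 mult_right_mono[of 1 "root_slope p" "real n"]
    by simp
  then have a_ge_1: "a \<ge> 1"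
    using n1 by simp
  have "(real j - 1) * (1 + a) ^ Suc m
      \<le> (real j - 1) * (a ^ Suc m + real (Suc m) * (1 + a) ^ m)"
    by (intro mult_left_mono one_plus_power_Suc_le) (use a_ge_1 assms in auto)
  then have binomial_step: "(real j - 1) * (1 + a) ^ Suc m
      \<le> (real j - 1) * a ^ Suc m + (real j - 1) * real (Suc m) * (1 + a) ^ m"
    by (simp add: algebra_simps)
  have "(real j - 1) * real (Suc m) * (1 + a) ^ m \<le> real j * real (Suc m) * (2 * a) ^ m"
    using a_ge_1 assms by (intro mult_mono power_mono) auto
  also have "\<dots> = a ^ m * (root_slope p * real j / 2)"
    unfolding slope by (simp add: power_mult_distrib)
  finally have tail_le:
    "(real j - 1) * real (Suc m) * (1 + a) ^ m \<le> a ^ m * (root_slope p * real j / 2)" .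
  have "real k \<le> real n * real n"
    using assms by (simp add: power2_eq_square flip: of_nat_mult)
  also have "\<dots> \<le> a ^ m * (a - root_slope p * real j / 2)"
  proof (intro mult_mono)
    show "real n \<le> a ^ m"
      using a_ge_n power_increasing[of 1 m a] a_ge_1 \<open>m \<ge> 1\<close> by simp
    have "root_slope p * real j \<le> root_slope p * real n"
      using assms \<open>root_slope p \<ge> 2\<close> by (intro mult_left_mono) auto
    moreover have "2 * real n \<le> root_slope p * real n"
      using \<open>root_slope p \<ge> 2\<close> by (intro mult_right_mono) auto
    ultimately show "real n \<le> a - root_slope p * real j / 2"
      unfolding a_def by linarith
  qed (use n1 a_ge_1 in auto)
  finally have "real k \<le> a ^ Suc m - a ^ m * (root_slope p * real j / 2)"
    by (simp add: algebra_simps)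
  with binomial_step tail_le have "gfun p k j a \<ge> 0"
    unfolding gfun_def p1 using assms by (simp add: algebra_simps)
  then show ?thesis
    unfolding a_def .
qed

lemma aroot_between:
  assumes "p \<ge> 3" "1 \<le> j" "j \<le> k" "j \<le> n" "k \<le> n\<^sup>2"
  shows "1 \<le> aroot p k j \<and> aroot p k j \<le> root_slope p * real n"
  unfolding aroot_def
proof (rule Inf_positive_roots_between)
  show "continuous_on {0..root_slope p * real n} (gfun p k j)"
    unfolding gfun_def by (intro continuous_intros)
  show "0 \<le> root_slope p * real n"
    by (simp add: root_slope_def)
qed (use assms gfun_nonneg_at_root_slope gfun_neg_below_one in auto)

lemma ln_diff_le_sum_inverse:
  assumes "1 \<le> m" "m \<le> n + 1"
  shows "ln (real n + 1) - ln (real m) \<le> (\<Sum>j = m..n. 1 / real j)"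
  using assms(2)
proof (induction n)
  case 0
  then show ?case
    using assms by simp
next
  case (Suc n)
  show ?case
  proof (cases "m = Suc n + 1")
    case False
    then have "ln (real n + 1) - ln (real m) \<le> (\<Sum>j = m..n. 1 / real j)"
      using Suc by simp
    moreover have "ln (real n + 2) - ln (real n + 1) \<le> 1 / (real n + 1)"
      using ln_diff_le_inverse[of "real n + 1"] by (simp add: add.assoc)
    ultimately show ?thesis
      using False Suc.prems by (simp add: ac_simps)
  qed simp
qed

lemma sum_inverse_aroot_ge:
  assumes "p \<ge> 3" "k \<ge> 1"
  shows "(ln (real k) - ln (4 * real k) / 2) / root_slope p \<le> (\<Sum>j = 1..k. 1 / aroot p k j)"
proof -
  define r where "r = floor_sqrt k"
  have "r \<ge> 1" "r \<le> k"
    using assms by (simp_all add: r_def le_floor_sqrtI floor_sqrt_le)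
  have "k < (r + 1)\<^sup>2"
    using Suc_floor_sqrt_power2_gt[of k] by (simp add: r_def)
  have "(real r + 1)\<^sup>2 \<le> 4 * real k"
  proof -
    have "(r + 1)\<^sup>2 \<le> (2 * r)\<^sup>2"
      using \<open>r \<ge> 1\<close> by (intro power_mono) auto
    also have "\<dots> \<le> 4 * k"
      using floor_sqrt_power2_le[of k] by (simp add: r_def power_mult_distrib)
    finally have "real ((r + 1)\<^sup>2) \<le> real (4 * k)"
      by (simp only: of_nat_le_iff)
    then show ?thesis
      by (simp add: algebra_simps)
  qed
  then have "ln ((real r + 1)\<^sup>2) \<le> ln (4 * real k)"
    by (intro ln_mono) auto
  then have "2 * ln (real r + 1) \<le> ln (4 * real k)"
    by (simp add: ln_realpow)
  moreover have "ln (real k) \<le> ln (real k + 1)"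
    using assms by simp
  moreover have "ln (real k + 1) - ln (real (r + 1)) \<le> (\<Sum>j = r + 1..k. 1 / real j)"
    using \<open>k < (r + 1)\<^sup>2\<close> \<open>r \<le> k\<close> by (intro ln_diff_le_sum_inverse) (auto simp: power2_eq_square)
  ultimately have "ln (real k) - ln (4 * real k) / 2 \<le> (\<Sum>j = r + 1..k. 1 / real j)"
    by (simp add: algebra_simps)
  then have "(ln (real k) - ln (4 * real k) / 2) / root_slope p
      \<le> (\<Sum>j = r + 1..k. 1 / real j) / root_slope p"
    using root_slope_ge_two[of p] assms by (simp add: divide_right_mono)
  also have "\<dots> = (\<Sum>j = r + 1..k. 1 / (root_slope p * real j))"
    by (simp add: sum_divide_distrib mult.commute)
  also have "\<dots> \<le> (\<Sum>j = r + 1..k. 1 / aroot p k j)"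
  proof (rule sum_mono)
    fix j assume "j \<in> {r + 1..k}"
    then have "(r + 1)\<^sup>2 \<le> j\<^sup>2"
      by (intro power_mono) auto
    then have "k \<le> j\<^sup>2"
      using \<open>k < (r + 1)\<^sup>2\<close> by linarith
    then show "1 / (root_slope p * real j) \<le> 1 / aroot p k j"
      using aroot_between[of p j k j] assms \<open>j \<in> {r + 1..k}\<close> by (auto intro!: divide_left_mono)
  qed
  also have "\<dots> \<le> (\<Sum>j = 1..k. 1 / aroot p k j)"
  proof (rule sum_mono2)
    fix j assume "j \<in> {1..k} - {r + 1..k}"
    then have "1 \<le> aroot p k j"
      using aroot_between[of p j k k] assms by (simp add: power2_eq_square)
    then show "0 \<le> 1 / aroot p k j"
      by simp
  qed auto
  finally show ?thesis .
qed

theorem mainTheorem9: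
  fixes p :: nat
  assumes "p \<ge> 3"
  shows "filterlim (\<lambda>k. \<Sum>j = 1..k. 1 / aroot p k j) at_top sequentially"
proof (rule filterlim_at_top_mono)
  have "root_slope p > 0"
    using root_slope_ge_two[of p] assms by simp
  then show "filterlim (\<lambda>k. (ln (real k) - ln (4 * real k) / 2) / root_slope p) at_top sequentially"
    by real_asymp
  show "\<forall>\<^sub>F k in sequentially. (ln (real k) - ln (4 * real k) / 2) / root_slope p
      \<le> (\<Sum>j = 1..k. 1 / aroot p k j)"
    using eventually_ge_at_top[of 1] by eventually_elim (use assms sum_inverse_aroot_ge in auto)
qed

end
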